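(* Let $K,T\subset\mathbb{R}^n$ be convex bodies and let $q=(q_1,\dots,q_m)$ be a closed $(K,T)$-Minkowski billiard trajectory with respect to the $K$-supporting hyperplanes $H_1,\dots,H_m$, with associated outer unit normal vectors $n_K(q_1),\dots,n_K(q_m)$ normal to $H_1,\dots,H_m$. Then $0\in\operatorname{conv}\{n_K(q_1),\dots,n_K(q_m)\}$. If moreover $T$ is smooth, then the convex cone $\widetilde U$ spanned by $n_K(q_1),\dots,n_K(q_m)$ is a linear subspace of $\mathbb{R}^n$ with $\dim\widetilde U\le m-1$.
   Context: A convex body is a compact convex set in $\mathbb{R}^n$ containing the origin in its interior; it is smooth if through each boundary point there is a unique supporting hyperplane. For a convex set $C$ and $z\in\partial C$, $N_C(z)=\{v:\langle v,y-z\rangle\le 0\ \forall y\in C\}$. A closed polygonal curve $(q_1,\dots,q_m)$, $m\ge2$, always satisfies $q_j\ne q_{j+1}$ and $q_j\notin[q_{j-1},q_{j+1}]$ (indices mod $m$). A closed polygonal curve $q$ with vertices on $\partial K$ is a closed $(K,T)$-Minkowski billiard trajectory with respect to the $K$-supporting hyperplanes $H_1,\dots,H_m$ through $q_1,\dots,q_m$ if there are $p_1,\dots,p_m\in\partial T$, outer unit normals $n_K(q_j)\in N_K(q_j)$ normal to $H_j$, and $\mu_j\ge 0$ with $q_{j+1}-q_j\in N_T(p_j)$ and $p_{j+1}-p_j=-\mu_{j+1}n_K(q_{j+1})$ for all $j$. *)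

theory Defs
  imports "HOL-Analysis.Analysis"
begin

definition convex_body :: "'a::euclidean_space set \<Rightarrow> bool" where
  "convex_body K \<longleftrightarrow> compact K \<and> convex K \<and> 0 \<in> interior K"

definition normal_cone :: "'a::euclidean_space set \<Rightarrow> 'a \<Rightarrow> 'a set" where
  "normal_cone C z = {v. \<forall>y\<in>C. inner v (y - z) \<le> 0}"

definition supporting_hyperplane :: "'a::euclidean_space set \<Rightarrow> 'a \<Rightarrow> 'a set \<Rightarrow> bool" where
  "supporting_hyperplane K z H \<longleftrightarrow>
     (\<exists>u. u \<noteq> 0 \<and> H = {x. inner u x = inner u z} \<and> (\<forall>y\<in>K. inner u y \<le> inner u z))"

definition smooth_body :: "'a::euclidean_space set \<Rightarrow> bool" where
  "smooth_body K \<longleftrightarrow> convex_body K \<and> (\<forall>z\<in>frontier K. \<exists>!H. supporting_hyperplane K z H)"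

definition closed_polygonal_curve :: "nat \<Rightarrow> (nat \<Rightarrow> 'a::euclidean_space) \<Rightarrow> bool" where
  "closed_polygonal_curve m q \<longleftrightarrow> 2 \<le> m \<and>
     (\<forall>j<m. q j \<noteq> q ((j + 1) mod m) \<and>
            q j \<notin> closed_segment (q ((j + m - 1) mod m)) (q ((j + 1) mod m)))"

definition minkowski_billiard_traj ::
  "'a::euclidean_space set \<Rightarrow> 'a set \<Rightarrow> nat \<Rightarrow> (nat \<Rightarrow> 'a) \<Rightarrow> (nat \<Rightarrow> 'a set) \<Rightarrow> (nat \<Rightarrow> 'a) \<Rightarrow> bool"
  where
  "minkowski_billiard_traj K T m q H n \<longleftrightarrow>
     closed_polygonal_curve m q \<and>
     (\<forall>j<m. q j \<in> frontier K \<and> supporting_hyperplane K (q j) (H j) \<and>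
            norm (n j) = 1 \<and> n j \<in> normal_cone K (q j) \<and>
            H j = {x. inner (n j) (x - q j) = 0}) \<and>
     (\<exists>p mu. (\<forall>j<m. p j \<in> frontier T \<and> mu j \<ge> (0::real)) \<and>
        (\<forall>j<m. q ((j + 1) mod m) - q j \<in> normal_cone T (p j) \<and>
               p ((j + 1) mod m) - p j = - (mu ((j + 1) mod m) *\<^sub>R n ((j + 1) mod m))))"

end

theory Submission
  imports Defs
begin

text \<open>
  Summing the impulse relations \<open>p (j+1) - p j = - \<mu> (j+1) n (j+1)\<close> around the closed
  orbit gives \<open>\<Sum>k. \<mu> k n k = 0\<close> with all \<open>\<mu> k \<ge> 0\<close>. Not all \<open>\<mu> k\<close> vanish:
  otherwise all \<open>p j\<close> coincide, and the nonzero edges of the closed polygon, which sum to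
  zero, would lie in a single normal cone of \<open>T\<close>; but normal cones of a body with
  nonempty interior are pointed. Normalising the relation puts \<open>0\<close> into the convex hull.

  If \<open>T\<close> is smooth, no \<open>\<mu> k\<close> vanishes: otherwise the two edges at \<open>q k\<close> are nonzero
  normals of \<open>T\<close> at one boundary point, hence positively parallel, which puts \<open>q k\<close> on
  the segment between its neighbours. A relation with all coefficients positive makes
  each \<open>- n k\<close> a nonnegative combination of the others, so the cone is a linear subspace,
  and the relation also bounds its dimension by \<open>m - 1\<close>.
\<close>

lemma sum_lessThan_telescope_mod:
  fixes f :: "nat \<Rightarrow> 'a::ab_group_add"
  assumes "0 < m"
  shows "(\<Sum>j<m. f ((j + 1) mod m) - f j) = 0"
proof -
  have "(\<Sum>j<m. f ((j + 1) mod m) - f j) = (\<Sum>j<m. f (Suc j mod m) - f (j mod m))"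
    by (intro sum.cong) auto
  also have "\<dots> = 0"
    using sum_lessThan_telescope[of "\<lambda>j. f (j mod m)" m] by simp
  finally show ?thesis .
qed

lemma sum_eq_0_if_cyclic_increments:
  fixes p w :: "nat \<Rightarrow> 'a::ab_group_add"
  assumes "0 < m" and "\<And>j. j < m \<Longrightarrow> p ((j + 1) mod m) - p j = - w ((j + 1) mod m)"
  shows "(\<Sum>k<m. w k) = 0"
proof -
  have "(\<Sum>j<m. p ((j + 1) mod m) - p j) = - (\<Sum>j<m. w ((j + 1) mod m))"
    using assms(2) by (simp add: sum_negf)
  then show ?thesis
    using sum_lessThan_telescope_mod[OF assms(1), of p] sum_lessThan_telescope_mod[OF assms(1), of w]
    by (simp add: sum_subtractf)
qed

lemma cyclic_constant_if_increments_0: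
  fixes m j :: nat
  assumes "\<And>j. j < m \<Longrightarrow> p ((j + 1) mod m) = p j"
  shows "j < m \<Longrightarrow> p j = p 0"
proof (induction j)
  case (Suc j)
  then have "p (Suc j) = p j"
    using assms[of j] by simp
  with Suc show ?case
    by simp
qed simp

lemma mod_Suc_predecessor:
  fixes k m :: nat
  assumes "k < m"
  shows "((k + m - 1) mod m + 1) mod m = k"
  using assms by (simp add: mod_Suc_eq)

lemma scaleR_add_eq_0_imp_eq:
  fixes x y :: "'a::real_vector"
  assumes "c \<noteq> 0" and "c *\<^sub>R x + y = 0"
  shows "x = - (1 / c) *\<^sub>R y"
proof -
  have "c *\<^sub>R x = - y"
    using assms(2) by (simp add: add_eq_0_iff2)
  then have "(1 / c) *\<^sub>R (c *\<^sub>R x) = (1 / c) *\<^sub>R (- y)"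
    by simp
  then show ?thesis
    using assms(1) by simp
qed

lemma in_closed_segment_if_codirected_steps:
  fixes a b d :: "'a::real_vector"
  assumes "0 < c" and "b - a = c *\<^sub>R (d - b)"
  shows "b \<in> closed_segment a d"
proof -
  have weights: "1 - c / (1 + c) = 1 / (1 + c)"
    using assms(1) by (simp add: field_simps)
  have "(1 + c) *\<^sub>R b = a + c *\<^sub>R d"
    using assms(2) by (simp add: algebra_simps)
  then have "(1 / (1 + c)) *\<^sub>R ((1 + c) *\<^sub>R b) = (1 / (1 + c)) *\<^sub>R (a + c *\<^sub>R d)"
    by simp
  then have "b = (1 / (1 + c)) *\<^sub>R (a + c *\<^sub>R d)"
    using assms(1) by simp
  also have "\<dots> = (1 - c / (1 + c)) *\<^sub>R a + (c / (1 + c)) *\<^sub>R d"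
    unfolding weights by (simp add: scaleR_add_right)
  finally show ?thesis
    unfolding closed_segment_def using assms(1) by (intro CollectI exI[of _ "c / (1 + c)"]) auto
qed

lemma zero_in_convex_hull_if_nonneg_relation:
  fixes v :: "'i \<Rightarrow> 'a::real_vector"
  assumes "finite A" and "\<And>i. i \<in> A \<Longrightarrow> 0 \<le> mu i" and "0 < sum mu A"
    and "(\<Sum>i\<in>A. mu i *\<^sub>R v i) = 0"
  shows "0 \<in> convex hull (v ` A)"
proof -
  have "(\<Sum>i\<in>A. (mu i / sum mu A) *\<^sub>R v i) \<in> convex hull (v ` A)"
    using assms(1-3)
    by (intro convex_sum) (auto simp: sum_divide_distrib[symmetric] hull_inc)
  moreover have "(\<Sum>i\<in>A. (mu i / sum mu A) *\<^sub>R v i) = (1 / sum mu A) *\<^sub>R (\<Sum>i\<in>A. mu i *\<^sub>R v i)"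
    by (simp add: scaleR_sum_right)
  ultimately show ?thesis
    using assms(4) by simp
qed

lemma convex_cone_hull_nonneg_combination:
  assumes "finite A" and "\<And>i. i \<in> A \<Longrightarrow> 0 \<le> c i"
  shows "(\<Sum>i\<in>A. c i *\<^sub>R v i) \<in> convex_cone hull (v ` A)"
  using assms
proof (induction A rule: finite_induct)
  case (insert a A)
  have "c a *\<^sub>R v a \<in> convex_cone hull (v ` insert a A)"
    using insert.prems by (intro convex_cone_hull_mul hull_inc) auto
  moreover have "(\<Sum>i\<in>A. c i *\<^sub>R v i) \<in> convex_cone hull (v ` insert a A)"
    using insert.IH insert.prems hull_mono[of "v ` A" "v ` insert a A"] by blast
  ultimately show ?case
    using insert.hyps by (simp add: convex_cone_hull_add)
qed (simp add: convex_cone_hull_contains_0)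

lemma uminus_in_convex_cone_hull_if_positive_relation:
  fixes v :: "'i \<Rightarrow> 'a::real_vector"
  assumes "finite A" and "\<And>i. i \<in> A \<Longrightarrow> 0 < mu i"
    and "(\<Sum>i\<in>A. mu i *\<^sub>R v i) = 0" and "k \<in> A"
  shows "- v k \<in> convex_cone hull (v ` A)"
proof -
  have "mu k *\<^sub>R v k + (\<Sum>i\<in>A - {k}. mu i *\<^sub>R v i) = 0"
    using assms(1,3,4) by (simp add: sum.remove)
  then have "v k = - (1 / mu k) *\<^sub>R (\<Sum>i\<in>A - {k}. mu i *\<^sub>R v i)"
    using assms(2)[OF assms(4)] by (intro scaleR_add_eq_0_imp_eq) auto
  then have "- v k = (1 / mu k) *\<^sub>R (\<Sum>i\<in>A - {k}. mu i *\<^sub>R v i)"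
    by simp
  also have "\<dots> = (\<Sum>i\<in>A - {k}. (mu i / mu k) *\<^sub>R v i)"
    by (simp add: scaleR_sum_right)
  also have "\<dots> \<in> convex_cone hull (v ` (A - {k}))"
    using assms(1,2,4) by (intro convex_cone_hull_nonneg_combination) (auto intro!: divide_nonneg_pos less_imp_le)
  also have "\<dots> \<subseteq> convex_cone hull (v ` A)"
    by (intro hull_mono image_mono) auto
  finally show ?thesis .
qed

lemma subspace_convex_cone_hull_if_uminus_closed:
  fixes S :: "'a::real_vector set"
  assumes "uminus ` S \<subseteq> convex_cone hull S"
  shows "subspace (convex_cone hull S)"
proof -
  have "uminus ` (convex_cone hull S) = convex_cone hull (uminus ` S)"
    by (simp add: convex_cone_hull_linear_image module_hom_uminus)
  also have "\<dots> \<subseteq> convex_cone hull S"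
    using assms by (intro hull_minimal) (auto simp: convex_cone_convex_cone_hull)
  finally show ?thesis
    by (auto simp: subspace_convex_cone_symmetric convex_cone_convex_cone_hull)
qed

lemma dim_image_le_card_minus_one_if_relation:
  fixes v :: "'i \<Rightarrow> 'a::euclidean_space"
  assumes "finite A" and "k \<in> A" and "mu k \<noteq> 0"
    and "(\<Sum>i\<in>A. mu i *\<^sub>R v i) = 0"
  shows "dim (v ` A) \<le> card A - 1"
proof -
  have "mu k *\<^sub>R v k + (\<Sum>i\<in>A - {k}. mu i *\<^sub>R v i) = 0"
    using assms(1,2,4) by (simp add: sum.remove)
  then have "v k = - (1 / mu k) *\<^sub>R (\<Sum>i\<in>A - {k}. mu i *\<^sub>R v i)"
    using assms(3) by (rule scaleR_add_eq_0_imp_eq[rotated])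
  also have "\<dots> \<in> span (v ` (A - {k}))"
    by (intro span_scale span_sum span_base) auto
  finally have "v ` A \<subseteq> span (v ` (A - {k}))"
    by (auto intro: span_base)
  then have "dim (v ` A) \<le> card (v ` (A - {k}))"
    using assms(1) by (intro dim_le_card) auto
  also have "\<dots> \<le> card (A - {k})"
    using assms(1) by (intro card_image_le) auto
  finally show ?thesis
    using assms(1,2) by simp
qed

lemma dim_convex_cone_hull_le:
  fixes S :: "'a::euclidean_space set"
  shows "dim (convex_cone hull S) \<le> dim S"
proof -
  have "convex_cone hull S \<subseteq> span S"
    by (intro hull_minimal span_superset convex_cone_span)
  then have "dim (convex_cone hull S) \<le> dim (span S)"
    by (rule dim_subset)
  then show ?thesis
    by simp
qed

lemma normal_cone_sum_eq_0_imp_eq_0: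
  fixes v :: "'i \<Rightarrow> 'a::euclidean_space"
  assumes "0 \<in> interior T" and "finite A"
    and "\<And>i. i \<in> A \<Longrightarrow> v i \<in> normal_cone T p" and "sum v A = 0" and "j \<in> A"
  shows "v j = 0"
proof (rule ccontr)
  assume nz: "v j \<noteq> 0"
  have orth: "inner (v j) (y - p) = 0" if "y \<in> T" for y
  proof -
    have "(\<Sum>i\<in>A. - inner (v i) (y - p)) = - inner (sum v A) (y - p)"
      by (simp add: inner_sum_left sum_negf)
    then have "(\<Sum>i\<in>A. - inner (v i) (y - p)) = 0"
      using assms(4) by simp
    moreover have "\<And>i. i \<in> A \<Longrightarrow> - inner (v i) (y - p) \<ge> 0"
      using assms(3) that by (auto simp: normal_cone_def)
    ultimately have "\<forall>i\<in>A. - inner (v i) (y - p) = 0"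
      using sum_nonneg_eq_0_iff[OF assms(2), of "\<lambda>i. - inner (v i) (y - p)"] by simp
    then show ?thesis
      using assms(5) by simp
  qed
  obtain e where e: "e > 0" "ball 0 e \<subseteq> T"
    using assms(1) mem_interior by blast
  define y where "y = (e / (2 * norm (v j))) *\<^sub>R v j"
  have "norm y = e / 2"
    using nz e by (simp add: y_def)
  then have "y \<in> T" and "0 \<in> T"
    using e by auto
  then have "inner (v j) (y - p) = 0" and "inner (v j) (0 - p) = 0"
    using orth by blast+
  then have "inner (v j) y = 0"
    by (simp add: inner_diff_right)
  then show False
    using nz e by (simp add: y_def)
qed

lemma smooth_body_normal_cone_codirected:
  fixes u v :: "'a::euclidean_space"
  assumes "smooth_body T" and "p \<in> frontier T"
    and "u \<in> normal_cone T p" and "v \<in> normal_cone T p" and "u \<noteq> 0" and "v \<noteq> 0"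
  obtains c where "0 < c" and "u = c *\<^sub>R v"
proof -
  have "supporting_hyperplane T p {x. inner u x = inner u p}"
    and "supporting_hyperplane T p {x. inner v x = inner v p}"
    using assms(3-6) unfolding supporting_hyperplane_def
    by (auto simp: normal_cone_def inner_diff_right)
  then have same: "{x. inner u x = inner u p} = {x. inner v x = inner v p}"
    using assms(1,2) unfolding smooth_body_def by blast
  \<comment> \<open>The supporting hyperplanes with normals \<open>u\<close> and \<open>v\<close> coincide, so the part \<open>w\<close> of \<open>u\<close>
    orthogonal to \<open>v\<close> is orthogonal to \<open>u\<close> as well.\<close>
  define c where "c = inner u v / inner v v"
  define w where "w = u - c *\<^sub>R v"
  have vw: "inner v w = 0"
    using assms(6) by (simp add: w_def c_def inner_diff_right inner_commute)
  then have "inner u w = 0"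
    using same by (auto simp: set_eq_iff inner_add_right dest: spec[of _ "p + w"])
  then have "inner w w = 0"
    using vw by (simp add: w_def inner_diff_left)
  then have u: "u = c *\<^sub>R v"
    by (simp add: w_def)
  have "\<not> c < 0"
  proof
    assume "c < 0"
    then have "(- c) *\<^sub>R v \<in> normal_cone T p"
      using assms(4) by (auto simp: normal_cone_def mult_nonpos_nonpos)
    moreover have "0 \<in> interior T"
      using assms(1) by (simp add: smooth_body_def convex_body_def)
    ultimately have "u = 0"
      using normal_cone_sum_eq_0_imp_eq_0[of T "{0::nat, 1}" "\<lambda>i. if i = 0 then u else (- c) *\<^sub>R v" p 0]
        assms(3) u by auto
    with assms(5) show False ..
  qed
  moreover have "c \<noteq> 0"
    using u assms(5) by auto
  ultimately have "0 < c"
    by linarith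
  with u show ?thesis
    using that by blast
qed

lemma closed_polygonal_curve_steps_not_in_one_normal_cone:
  assumes "0 \<in> interior T" and "closed_polygonal_curve m q"
    and "\<And>j. j < m \<Longrightarrow> q ((j + 1) mod m) - q j \<in> normal_cone T p"
  shows False
proof -
  have m: "0 < m"
    using assms(2) by (simp add: closed_polygonal_curve_def)
  then have "q 0 \<noteq> q ((0 + 1) mod m)"
    using assms(2) unfolding closed_polygonal_curve_def by blast
  moreover have "q ((0 + 1) mod m) - q 0 = 0"
  proof (rule normal_cone_sum_eq_0_imp_eq_0[OF assms(1) finite_lessThan])
    show "q ((j + 1) mod m) - q j \<in> normal_cone T p" if "j \<in> {..<m}" for j
      using assms(3) that by simp
    show "(\<Sum>j<m. q ((j + 1) mod m) - q j) = 0"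
      by (rule sum_lessThan_telescope_mod[OF m])
  qed (use m in simp)
  ultimately show False
    by (simp only: right_minus_eq) blast
qed

lemma closed_polygonal_curve_steps_not_codirected_at_smooth_point:
  assumes "smooth_body T" and "closed_polygonal_curve m q" and "k < m" and "p \<in> frontier T"
    and "q k - q ((k + m - 1) mod m) \<in> normal_cone T p"
    and "q ((k + 1) mod m) - q k \<in> normal_cone T p"
  shows False
proof -
  define i where "i = (k + m - 1) mod m"
  have "i < m" and "(i + 1) mod m = k"
    using assms(3) mod_Suc_predecessor by (auto simp: i_def)
  then have "q k - q i \<noteq> 0"
    using assms(2) unfolding closed_polygonal_curve_def by (metis right_minus_eq)
  moreover have "q ((k + 1) mod m) - q k \<noteq> 0"
    using assms(2,3) unfolding closed_polygonal_curve_def by (metis right_minus_eq)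
  ultimately obtain c where "0 < c" and "q k - q i = c *\<^sub>R (q ((k + 1) mod m) - q k)"
    using smooth_body_normal_cone_codirected[OF assms(1,4)] assms(5,6) by (metis i_def)
  then have "q k \<in> closed_segment (q i) (q ((k + 1) mod m))"
    by (rule in_closed_segment_if_codirected_steps)
  then show False
    using assms(2,3) unfolding closed_polygonal_curve_def i_def by blast
qed

lemma minkowski_billiard_traj_normal_relation:
  fixes n :: "nat \<Rightarrow> 'a::euclidean_space"
  assumes "0 \<in> interior T" and "minkowski_billiard_traj K T m q H n"
  obtains mu :: "nat \<Rightarrow> real"
  where "\<And>k. k < m \<Longrightarrow> 0 \<le> mu k" and "0 < sum mu {..<m}"
    and "(\<Sum>k<m. mu k *\<^sub>R n k) = 0"
    and "smooth_body T \<Longrightarrow> \<forall>k<m. 0 < mu k"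
proof -
  have curve: "closed_polygonal_curve m q"
    using assms(2) by (simp add: minkowski_billiard_traj_def)
  then have m: "0 < m"
    by (simp add: closed_polygonal_curve_def)
  obtain p mu where pm: "\<And>j. j < m \<Longrightarrow> p j \<in> frontier T \<and> 0 \<le> mu j"
    and steps: "\<And>j. j < m \<Longrightarrow> q ((j + 1) mod m) - q j \<in> normal_cone T (p j)"
    and impulses: "\<And>j. j < m \<Longrightarrow> p ((j + 1) mod m) - p j = - (mu ((j + 1) mod m) *\<^sub>R n ((j + 1) mod m))"
    using assms(2) unfolding minkowski_billiard_traj_def by metis
  have relation: "(\<Sum>k<m. mu k *\<^sub>R n k) = 0"
    using m impulses by (rule sum_eq_0_if_cyclic_increments)
  have "\<exists>k<m. mu k \<noteq> 0"
  proof (rule ccontr)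
    assume "\<not> (\<exists>k<m. mu k \<noteq> 0)"
    then have "\<And>j. j < m \<Longrightarrow> p j = p 0"
      using impulses by (intro cyclic_constant_if_increments_0) auto
    then show False
      using closed_polygonal_curve_steps_not_in_one_normal_cone[OF assms(1) curve, of "p 0"] steps
      by metis
  qed
  then have "0 < sum mu {..<m}"
    using pm by (metis finite_lessThan lessThan_iff order_le_neq_trans sum_pos2)
  moreover have "0 < mu k" if smooth: "smooth_body T" and k: "k < m" for k
  proof (rule ccontr)
    assume "\<not> 0 < mu k"
    then have "mu k = 0"
      using pm[OF k] by simp
    define i where "i = (k + m - 1) mod m"
    have "i < m" and "(i + 1) mod m = k"
      using k mod_Suc_predecessor by (auto simp: i_def)
    then have "p k = p i" and "q k - q i \<in> normal_cone T (p i)"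
      using impulses[of i] steps[of i] \<open>mu k = 0\<close> by auto
    then have "q k - q ((k + m - 1) mod m) \<in> normal_cone T (p k)"
      unfolding i_def[symmetric] by simp
    then show False
      using closed_polygonal_curve_steps_not_codirected_at_smooth_point[OF smooth curve k _ _ steps[OF k]]
        pm[OF k] by blast
  qed
  ultimately show ?thesis
    using that pm relation by blast
qed

theorem proposition3p7:
  fixes K T :: "'a::euclidean_space set" and m :: nat and q n :: "nat \<Rightarrow> 'a"
    and H :: "nat \<Rightarrow> 'a set"
  assumes "convex_body K" and "convex_body T"
    and "minkowski_billiard_traj K T m q H n"
  shows "0 \<in> convex hull (n ` {..<m}) \<and>
         (smooth_body T \<longrightarrow>
           subspace (convex_cone hull (n ` {..<m})) \<and>
           dim (convex_cone hull (n ` {..<m})) \<le> m - 1)"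
proof -
  have "0 \<in> interior T"
    using assms(2) by (simp add: convex_body_def)
  then obtain mu where nonneg: "\<And>k. k < m \<Longrightarrow> 0 \<le> mu k" and total: "0 < sum mu {..<m}"
    and relation: "(\<Sum>k<m. mu k *\<^sub>R n k) = 0" and smooth: "smooth_body T \<Longrightarrow> \<forall>k<m. 0 < mu k"
    using minkowski_billiard_traj_normal_relation[OF _ assms(3)] by blast
  have "0 < m"
    using total by (cases m) auto
  have "0 \<in> convex hull (n ` {..<m})"
    using nonneg total relation by (intro zero_in_convex_hull_if_nonneg_relation) auto
  moreover have "subspace (convex_cone hull (n ` {..<m})) \<and> dim (convex_cone hull (n ` {..<m})) \<le> m - 1"
    if "smooth_body T"
  proof
    have pos: "\<And>k. k < m \<Longrightarrow> 0 < mu k"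
      using smooth that by blast
    have "uminus ` n ` {..<m} \<subseteq> convex_cone hull (n ` {..<m})"
      using pos relation uminus_in_convex_cone_hull_if_positive_relation[of "{..<m}" mu n] by auto
    then show "subspace (convex_cone hull (n ` {..<m}))"
      by (rule subspace_convex_cone_hull_if_uminus_closed)
    have "dim (convex_cone hull (n ` {..<m})) \<le> dim (n ` {..<m})"
      by (rule dim_convex_cone_hull_le)
    also have "\<dots> \<le> card {..<m} - 1"
      using pos[of 0] \<open>0 < m\<close> relation by (intro dim_image_le_card_minus_one_if_relation) auto
    finally show "dim (convex_cone hull (n ` {..<m})) \<le> m - 1"
      by simp
  qed
  ultimately show ?thesis
    by blast
qed

end
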